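(* Let $B$ be a finite simplicial complex and $A\subset B$ a nonempty subset consisting of simplices of dimension $\le m$. Then $|A|$ has the homotopy type of a finite CW complex of dimension $\le m$.
   Context: Simplicial complexes are collections of simplices in a finite-dimensional Euclidean space. For a subset (collection of simplices) $A$ of $B$, $|A|$ denotes the union of the open simplices $\mathring{\sigma}$, $\sigma\in A$. *)

theory Defs
  imports "HOL-Analysis.Analysis"
begin

text \<open>Standard n-dimensional disc, open disc and boundary sphere, realised inside
  the space of real sequences (coordinates \<open>\<ge> n\<close> vanish), with the product topology
  (which agrees with the Euclidean topology on these finite-dimensional sets).\<close>

definition disc_set :: "nat \<Rightarrow> (nat \<Rightarrow> real) set" where
  "disc_set n = {x. (\<Sum>i<n. (x i)\<^sup>2) \<le> 1 \<and> (\<forall>i\<ge>n. x i = 0)}"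

definition open_disc_set :: "nat \<Rightarrow> (nat \<Rightarrow> real) set" where
  "open_disc_set n = {x. (\<Sum>i<n. (x i)\<^sup>2) < 1 \<and> (\<forall>i\<ge>n. x i = 0)}"

definition sphere_set :: "nat \<Rightarrow> (nat \<Rightarrow> real) set" where
  "sphere_set n = {x. (\<Sum>i<n. (x i)\<^sup>2) = 1 \<and> (\<forall>i\<ge>n. x i = 0)}"

text \<open>A finite CW complex of dimension \<open>\<le> m\<close> (Hatcher, Appendix; for finitely many
  cells the weak topology and closure finiteness are automatic): a Hausdorff space
  with finitely many cells, indexed by \<open>i < k\<close>, cell \<open>i\<close> of dimension \<open>d i \<le> m\<close>, with
  characteristic maps \<open>\<Phi> i\<close> from the closed disc, restricting to a homeomorphism of
  the open disc onto the open cell; the open cells partition the space and the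
  boundary sphere of each cell is mapped into the union of cells of lower dimension.\<close>

definition finite_CW_complex_dim :: "'b topology \<Rightarrow> nat \<Rightarrow> bool" where
  "finite_CW_complex_dim X m \<longleftrightarrow>
     Hausdorff_space X \<and>
     (\<exists>(k::nat) (d::nat \<Rightarrow> nat) (\<Phi>::nat \<Rightarrow> (nat \<Rightarrow> real) \<Rightarrow> 'b).
        (\<forall>i<k. d i \<le> m) \<and>
        (\<forall>i<k. continuous_map (subtopology (powertop_real UNIV) (disc_set (d i))) X (\<Phi> i)) \<and>
        (\<forall>i<k. homeomorphic_map (subtopology (powertop_real UNIV) (open_disc_set (d i)))
                                 (subtopology X (\<Phi> i ` open_disc_set (d i))) (\<Phi> i)) \<and>
        (\<forall>i<k. \<forall>j<k. i \<noteq> j \<longrightarrow> \<Phi> i ` open_disc_set (d i) \<inter> \<Phi> j ` open_disc_set (d j) = {}) \<and>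
        (\<Union>i<k. \<Phi> i ` open_disc_set (d i)) = topspace X \<and>
        (\<forall>i<k. \<Phi> i ` sphere_set (d i) \<subseteq> (\<Union>j\<in>{j. j < k \<and> d j < d i}. \<Phi> j ` open_disc_set (d j))))"

text \<open>Polyhedron of a set of simplices: union of the open simplices (relative interiors).\<close>

definition open_union :: "'a::euclidean_space set set \<Rightarrow> 'a set" where
  "open_union A = (\<Union>S\<in>A. rel_interior S)"

end

theory Submission
  imports Defs
begin

(* Index the nonempty simplices of A by 0, ..., N-1 and let K be the set of points of the
   standard simplex in R^N whose support is a chain of simplices under inclusion (the order
   complex of A). Its open simplices are the cells of a finite CW complex, of dimension <= m
   because such a chain has at most m + 1 members.
   In barycentric coordinates \<lambda> of B, give a point x of |A| the weight
   W_S(x) = max 0 (min_{v in S} \<lambda>_v(x) - max_{v not in S} \<lambda>_v(x)) for each S in A. The simplices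
   of positive weight form a chain, which contains the simplex whose open simplex holds x; so
   normalising the weights maps |A| into K. Conversely y in K goes to the sum of y_S times the
   barycentre of S, which lies in the open simplex of the largest S in the support of y. Both
   composites are joined to the identity by straight lines: in |A| the segment stays in one open
   simplex, in K its support is still a chain. *)

lemma continuous_on_Max_image:
  assumes "finite I" "I \<noteq> {}" "\<And>i. i \<in> I \<Longrightarrow> continuous_on S (f i)"
  shows "continuous_on S (\<lambda>x. Max ((\<lambda>i. f i x :: real) ` I))"
  using assms
proof (induction I rule: finite_ne_induct)
  case (insert a F)
  then have "continuous_on S (\<lambda>x. max (f a x) (Max ((\<lambda>i. f i x) ` F)))"
    by (intro continuous_on_max) auto
  with insert show ?case by simp
qed simp

lemma continuous_on_Min_image:
  assumes "finite I" "I \<noteq> {}" "\<And>i. i \<in> I \<Longrightarrow> continuous_on S (f i)"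
  shows "continuous_on S (\<lambda>x. Min ((\<lambda>i. f i x :: real) ` I))"
  using assms
proof (induction I rule: finite_ne_induct)
  case (insert a F)
  then have "continuous_on S (\<lambda>x. min (f a x) (Min ((\<lambda>i. f i x) ` F)))"
    by (intro continuous_on_min) auto
  with insert show ?case by simp
qed simp

lemma continuous_on_coordinate [continuous_intros]: "continuous_on S (\<lambda>x::nat \<Rightarrow> real. x i)"
  by (rule continuous_on_subset[OF continuous_on_product_coordinates]) simp

section \<open>A homeomorphism from the disc onto the standard simplex\<close>

definition std_simplex :: "nat \<Rightarrow> (nat \<Rightarrow> real) set" where
  "std_simplex d = {z. (\<forall>i. 0 \<le> z i) \<and> (\<forall>i>d. z i = 0) \<and> (\<Sum>i\<le>d. z i) = 1}"

definition std_open_simplex :: "nat \<Rightarrow> (nat \<Rightarrow> real) set" where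
  "std_open_simplex d = {z \<in> std_simplex d. \<forall>i\<le>d. 0 < z i}"

definition disc_norm :: "nat \<Rightarrow> (nat \<Rightarrow> real) \<Rightarrow> real" where
  "disc_norm d x = sqrt (\<Sum>i<d. (x i)\<^sup>2)"

definition simplex_direction :: "nat \<Rightarrow> (nat \<Rightarrow> real) \<Rightarrow> nat \<Rightarrow> real" where
  "simplex_direction d x i = (if i < d then x i else if i = d then - (\<Sum>j<d. x j) else 0)"

definition simplex_depth :: "nat \<Rightarrow> (nat \<Rightarrow> real) \<Rightarrow> real" where
  "simplex_depth d x = Max ((\<lambda>i. - simplex_direction d x i) ` {..d})"

text \<open>A radial homeomorphism from the closed \<open>d\<close>-disc onto the standard \<open>d\<close>-simplex:
  \<open>simplex_direction\<close> maps \<open>\<real>\<^sup>d\<close> linearly onto the hyperplane of coordinate sum \<open>0\<close> in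
  \<open>\<real>\<^bsup>d + 1\<^esup>\<close>, and \<open>(d + 1) * simplex_depth\<close> is the gauge of the simplex translated to put its
  barycentre at the origin. At the centre, division by zero yields the barycentre.\<close>

definition disc_to_simplex :: "nat \<Rightarrow> (nat \<Rightarrow> real) \<Rightarrow> nat \<Rightarrow> real" where
  "disc_to_simplex d x i =
     (if i \<le> d then (1 + disc_norm d x * simplex_direction d x i / simplex_depth d x) / real (Suc d)
      else 0)"

lemma sum_simplex_direction: "(\<Sum>i\<le>d. simplex_direction d x i) = 0"
  by (simp add: lessThan_Suc_atMost[symmetric] simplex_direction_def)

lemma simplex_depth_ge: "i \<le> d \<Longrightarrow> - simplex_direction d x i \<le> simplex_depth d x"
  unfolding simplex_depth_def by (rule Max_ge) auto

lemma simplex_depth_attained: "\<exists>i\<le>d. - simplex_direction d x i = simplex_depth d x"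
proof -
  have "simplex_depth d x \<in> (\<lambda>i. - simplex_direction d x i) ` {..d}"
    unfolding simplex_depth_def by (rule Max_in) auto
  then show ?thesis by force
qed

lemma simplex_direction_le:
  assumes "i \<le> d" shows "simplex_direction d x i \<le> real d * simplex_depth d x"
proof -
  have "simplex_direction d x i + (\<Sum>j\<in>{..d}-{i}. simplex_direction d x j) = 0"
    using sum_simplex_direction[of d x] sum.remove[of "{..d}" i "simplex_direction d x"] assms by simp
  then have "simplex_direction d x i = (\<Sum>j\<in>{..d}-{i}. - simplex_direction d x j)"
    by (simp add: sum_negf eq_neg_iff_add_eq_0)
  also have "\<dots> \<le> (\<Sum>j\<in>{..d}-{i}. simplex_depth d x)"
    by (rule sum_mono) (simp add: simplex_depth_ge)
  finally show ?thesis using assms by simp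
qed

lemma simplex_depth_nonneg: "0 \<le> simplex_depth d x"
proof -
  have "0 \<le> real d * simplex_depth d x + simplex_depth d x"
    using simplex_direction_le[of d d x] simplex_depth_ge[of d d x] by linarith
  then have "0 \<le> real (Suc d) * simplex_depth d x"
    by (simp add: algebra_simps)
  then show ?thesis
    by (simp add: zero_le_mult_iff)
qed

lemma abs_simplex_direction_le:
  "i \<le> d \<Longrightarrow> \<bar>simplex_direction d x i\<bar> \<le> real (Suc d) * simplex_depth d x"
  unfolding abs_le_iff of_nat_Suc distrib_right mult_1_left
  using simplex_direction_le[of i d x] simplex_depth_ge[of i d x] simplex_depth_nonneg[of d x]
    mult_nonneg_nonneg[OF of_nat_0_le_iff simplex_depth_nonneg, of d d x]
  by linarith

lemma disc_norm_nonneg: "0 \<le> disc_norm d x"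
  by (simp add: disc_norm_def sum_nonneg)

lemma disc_norm_eq_0_iff: "disc_norm d x = 0 \<longleftrightarrow> (\<forall>i<d. x i = 0)"
  unfolding disc_norm_def using sum_nonneg_eq_0_iff[of "{..<d}" "\<lambda>i. (x i)\<^sup>2"] by auto

lemma simplex_depth_eq_0_iff: "simplex_depth d x = 0 \<longleftrightarrow> disc_norm d x = 0"
proof
  assume "simplex_depth d x = 0"
  then have "\<forall>i\<in>{..d}. 0 \<le> simplex_direction d x i"
    using simplex_depth_ge[of _ d x] by force
  then have zero: "\<forall>i\<in>{..d}. simplex_direction d x i = 0"
    using sum_nonneg_eq_0_iff sum_simplex_direction by blast
  have "x i = 0" if "i < d" for i
  proof -
    have "simplex_direction d x i = 0" using zero that by simp
    then show ?thesis using that by (simp add: simplex_direction_def)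
  qed
  then show "disc_norm d x = 0"
    by (simp add: disc_norm_eq_0_iff)
next
  assume "disc_norm d x = 0"
  then have "simplex_direction d x = (\<lambda>_. 0)"
    by (auto simp: disc_norm_eq_0_iff simplex_direction_def)
  then have "(\<lambda>i. - simplex_direction d x i) ` {..d} = {0}"
    by auto
  then show "simplex_depth d x = 0"
    by (simp add: simplex_depth_def)
qed

lemma simplex_direction_scale: "simplex_direction d (\<lambda>i. c * x i) i = c * simplex_direction d x i"
  by (simp add: simplex_direction_def sum_distrib_left)

lemma simplex_depth_scale:
  assumes "0 \<le> c" shows "simplex_depth d (\<lambda>i. c * x i) = c * simplex_depth d x"
proof -
  have "simplex_depth d (\<lambda>i. c * x i) = Max ((*) c ` (\<lambda>i. - simplex_direction d x i) ` {..d})"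
    by (simp add: simplex_depth_def simplex_direction_scale image_image)
  also have "\<dots> = c * simplex_depth d x"
    unfolding simplex_depth_def
    by (rule mono_Max_commute[symmetric]) (auto simp: mono_def assms mult_left_mono)
  finally show ?thesis .
qed

lemma disc_norm_scale:
  assumes "0 \<le> c" shows "disc_norm d (\<lambda>i. c * x i) = c * disc_norm d x"
  using assms
  by (simp add: disc_norm_def power_mult_distrib sum_distrib_left[symmetric] real_sqrt_mult)

lemma disc_to_simplex_lower_bound:
  assumes "i \<le> d" "0 < simplex_depth d x"
  shows "(1 - disc_norm d x) / real (Suc d) \<le> disc_to_simplex d x i"
proof -
  have "- simplex_depth d x \<le> simplex_direction d x i"
    using simplex_depth_ge[OF assms(1), of x] by linarith
  then have "disc_norm d x * - simplex_depth d x \<le> disc_norm d x * simplex_direction d x i"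
    by (rule mult_left_mono) (rule disc_norm_nonneg)
  then have "- disc_norm d x \<le> disc_norm d x * simplex_direction d x i / simplex_depth d x"
    using assms(2) by (simp add: pos_le_divide_eq)
  then show ?thesis
    using assms(1) by (simp add: disc_to_simplex_def divide_right_mono)
qed

lemma disc_to_simplex_at_depth:
  assumes "i \<le> d" "0 < simplex_depth d x" "- simplex_direction d x i = simplex_depth d x"
  shows "disc_to_simplex d x i = (1 - disc_norm d x) / real (Suc d)"
proof -
  have "simplex_direction d x i = - simplex_depth d x" using assms(3) by simp
  then show ?thesis using assms(1,2) by (simp add: disc_to_simplex_def)
qed

lemma sum_disc_to_simplex: "(\<Sum>i\<le>d. disc_to_simplex d x i) = 1"
proof -
  have "(\<Sum>i\<le>d. disc_to_simplex d x i)
      = (\<Sum>i\<le>d. 1 / real (Suc d))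
        + disc_norm d x / (simplex_depth d x * real (Suc d)) * (\<Sum>i\<le>d. simplex_direction d x i)"
    by (simp add: disc_to_simplex_def add_divide_distrib sum.distrib sum_distrib_left)
  then show ?thesis by (simp add: sum_simplex_direction)
qed

lemma disc_to_simplex_nonneg:
  assumes "disc_norm d x \<le> 1" shows "0 \<le> disc_to_simplex d x i"
proof (cases "i \<le> d \<and> 0 < simplex_depth d x")
  case True
  moreover have "0 \<le> (1 - disc_norm d x) / real (Suc d)"
    using assms by simp
  ultimately show ?thesis
    using disc_to_simplex_lower_bound[of i d x] by linarith
next
  case False
  then show ?thesis
    using simplex_depth_nonneg[of d x] by (auto simp: disc_to_simplex_def)
qed

lemma disc_to_simplex_pos:
  assumes "disc_norm d x < 1" "i \<le> d" shows "0 < disc_to_simplex d x i"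
proof (cases "0 < simplex_depth d x")
  case True
  moreover have "0 < (1 - disc_norm d x) / real (Suc d)"
    using assms(1) by simp
  ultimately show ?thesis
    using disc_to_simplex_lower_bound[OF assms(2), of x] by linarith
next
  case False
  then show ?thesis
    using simplex_depth_nonneg[of d x] assms(2) by (simp add: disc_to_simplex_def)
qed

lemma disc_norm_le_1: "x \<in> disc_set d \<Longrightarrow> disc_norm d x \<le> 1"
  by (simp add: disc_set_def disc_norm_def)

lemma disc_to_simplex_in_std_simplex:
  assumes "x \<in> disc_set d" shows "disc_to_simplex d x \<in> std_simplex d"
  unfolding std_simplex_def mem_Collect_eq
proof (intro conjI allI impI)
  show "0 \<le> disc_to_simplex d x i" for i
    using disc_to_simplex_nonneg[OF disc_norm_le_1[OF assms]] .
  show "disc_to_simplex d x i = 0" if "d < i" for i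
    using that by (simp add: disc_to_simplex_def)
qed (rule sum_disc_to_simplex)

lemma disc_to_simplex_in_std_open_simplex:
  assumes "x \<in> open_disc_set d" shows "disc_to_simplex d x \<in> std_open_simplex d"
proof -
  have "x \<in> disc_set d" "disc_norm d x < 1"
    using assms by (auto simp: open_disc_set_def disc_set_def disc_norm_def)
  then show ?thesis
    using disc_to_simplex_in_std_simplex disc_to_simplex_pos by (simp add: std_open_simplex_def)
qed

lemma disc_to_simplex_sphere:
  assumes "x \<in> sphere_set d" shows "disc_to_simplex d x \<notin> std_open_simplex d"
proof -
  have "disc_norm d x = 1"
    using assms by (simp add: sphere_set_def disc_norm_def)
  then have "0 < simplex_depth d x"
    using simplex_depth_eq_0_iff[of d x] simplex_depth_nonneg[of d x] by auto
  moreover obtain i where "i \<le> d" "- simplex_direction d x i = simplex_depth d x"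
    using simplex_depth_attained by blast
  ultimately have "disc_to_simplex d x i = 0"
    using disc_to_simplex_at_depth \<open>disc_norm d x = 1\<close> by simp
  then show ?thesis
    using \<open>i \<le> d\<close> by (auto simp: std_open_simplex_def)
qed

lemma disc_to_simplex_centre: "disc_to_simplex d (\<lambda>_. 0) i = (if i \<le> d then 1 / real (Suc d) else 0)"
  by (simp add: disc_to_simplex_def disc_norm_def)

lemma disc_to_simplex_rescaled:
  assumes "0 < disc_norm d y"
  defines "c \<equiv> real (Suc d) * simplex_depth d y / disc_norm d y"
  shows "disc_norm d (\<lambda>i. c * y i) = real (Suc d) * simplex_depth d y"
    and "i \<le> d \<Longrightarrow> disc_to_simplex d (\<lambda>i. c * y i) i = 1 / real (Suc d) + simplex_direction d y i"
proof -
  have depth: "0 < simplex_depth d y"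
    using assms(1) simplex_depth_eq_0_iff[of d y] simplex_depth_nonneg[of d y] by auto
  then have c: "0 < c"
    using assms(1) by (simp add: c_def)
  show norm: "disc_norm d (\<lambda>i. c * y i) = real (Suc d) * simplex_depth d y"
    using disc_norm_scale[of c d y] c assms(1) by (simp add: c_def)
  assume "i \<le> d"
  have "disc_norm d (\<lambda>i. c * y i) * simplex_direction d (\<lambda>i. c * y i) i / simplex_depth d (\<lambda>i. c * y i)
      = real (Suc d) * simplex_direction d y i"
    using c depth by (simp add: norm simplex_direction_scale simplex_depth_scale)
  then show "disc_to_simplex d (\<lambda>i. c * y i) i = 1 / real (Suc d) + simplex_direction d y i"
    using \<open>i \<le> d\<close> by (simp add: disc_to_simplex_def add_divide_distrib)
qed

lemma simplex_direction_centred: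
  assumes "(\<Sum>i\<le>d. z i) = 1" "i \<le> d"
  shows "simplex_direction d (\<lambda>j. if j < d then z j - 1 / real (Suc d) else 0) i = z i - 1 / real (Suc d)"
proof (cases "i < d")
  case False
  then have "i = d"
    using assms(2) by simp
  moreover have "(\<Sum>j<d. z j - 1 / real (Suc d)) = (1 - z d) - real d / real (Suc d)"
    using assms(1) by (simp add: sum_subtractf lessThan_Suc_atMost[symmetric])
  moreover have "real d / real (Suc d) = 1 - 1 / real (Suc d)"
    by (simp add: field_simps)
  ultimately show ?thesis
    by (simp add: simplex_direction_def)
qed (simp add: simplex_direction_def)

lemma disc_to_simplex_onto:
  assumes z: "z \<in> std_open_simplex d" shows "\<exists>x\<in>open_disc_set d. disc_to_simplex d x = z"
proof -
  have zpos: "\<And>i. i \<le> d \<Longrightarrow> 0 < z i" and zzero: "\<And>i. d < i \<Longrightarrow> z i = 0"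
    and zsum: "(\<Sum>i\<le>d. z i) = 1"
    using z by (auto simp: std_open_simplex_def std_simplex_def)
  define y where "y j = (if j < d then z j - 1 / real (Suc d) else 0)" for j
  have dir_y: "simplex_direction d y i = z i - 1 / real (Suc d)" if "i \<le> d" for i
    unfolding y_def using zsum that by (rule simplex_direction_centred)
  show ?thesis
  proof (cases "disc_norm d y = 0")
    case True
    then have "simplex_direction d y i = 0" for i
      by (simp add: disc_norm_eq_0_iff simplex_direction_def y_def)
    then have "disc_to_simplex d (\<lambda>_. 0) = z"
      using dir_y zzero by (auto simp: fun_eq_iff disc_to_simplex_centre not_le)
    moreover have "(\<lambda>_. 0) \<in> open_disc_set d"
      by (simp add: open_disc_set_def)
    ultimately show ?thesis by blast
  next
    case False
    then have norm_y: "0 < disc_norm d y"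
      using disc_norm_nonneg[of d y] by simp
    define x where "x = (\<lambda>i. real (Suc d) * simplex_depth d y / disc_norm d y * y i)"
    obtain i0 where i0: "i0 \<le> d" "- simplex_direction d y i0 = simplex_depth d y"
      using simplex_depth_attained by blast
    have "disc_norm d x = real (Suc d) * simplex_depth d y"
      unfolding x_def by (rule disc_to_simplex_rescaled(1)[OF norm_y])
    also have "\<dots> = 1 - real (Suc d) * z i0"
      using i0 dir_y[OF i0(1)] by (simp add: field_simps)
    finally have "disc_norm d x = 1 - real (Suc d) * z i0" .
    moreover have "0 < real (Suc d) * z i0"
      using zpos[OF i0(1)] by simp
    ultimately have "sqrt (\<Sum>i<d. (x i)\<^sup>2) < 1"
      by (simp add: disc_norm_def)
    then have "x \<in> open_disc_set d"
      by (simp add: open_disc_set_def x_def y_def)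
    moreover have "disc_to_simplex d x i = z i" for i
    proof (cases "i \<le> d")
      case True
      then show ?thesis
        unfolding x_def using disc_to_simplex_rescaled(2)[OF norm_y True] dir_y[OF True] by simp
    qed (simp add: disc_to_simplex_def zzero)
    ultimately show ?thesis by blast
  qed
qed

lemma disc_to_simplex_below:
  "i < d \<Longrightarrow> disc_to_simplex d x i = (1 + disc_norm d x / simplex_depth d x * x i) / real (Suc d)"
  by (simp add: disc_to_simplex_def simplex_direction_def)

lemma disc_norm_div_depth_mult: "disc_norm d x / simplex_depth d x * simplex_depth d x = disc_norm d x"
  using simplex_depth_eq_0_iff[of d x] by (cases "simplex_depth d x = 0") auto

lemma inj_on_disc_to_simplex: "inj_on (disc_to_simplex d) (disc_set d)"
proof (rule inj_onI)
  fix x y assume x: "x \<in> disc_set d" and y: "y \<in> disc_set d"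
    and eq: "disc_to_simplex d x = disc_to_simplex d y"
  define s where "s z = disc_norm d z / simplex_depth d z" for z
  have s_nonneg: "0 \<le> s z" for z
    by (simp add: s_def disc_norm_nonneg simplex_depth_nonneg)
  have scaled: "(\<lambda>i. s x * x i) = (\<lambda>i. s y * y i)"
  proof
    fix i show "s x * x i = s y * y i"
    proof (cases "i < d")
      case True
      then show ?thesis
        using fun_cong[OF eq, of i] by (simp add: disc_to_simplex_below s_def)
    qed (use x y in \<open>simp add: disc_set_def\<close>)
  qed
  text \<open>The rescaled point has depth equal to the original norm; this recovers the norm, hence
    the scale factor.\<close>
  have "simplex_depth d (\<lambda>i. s z * z i) = s z * simplex_depth d z" for z
    by (rule simplex_depth_scale[OF s_nonneg])
  then have depth_scaled: "simplex_depth d (\<lambda>i. s z * z i) = disc_norm d z" for z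
    by (simp only: s_def disc_norm_div_depth_mult)
  have norm_eq: "disc_norm d x = disc_norm d y"
    using depth_scaled[of x] depth_scaled[of y] by (simp only: scaled)
  have "s x * disc_norm d x = s y * disc_norm d y"
    using disc_norm_scale[of "s x" d x, OF s_nonneg] disc_norm_scale[of "s y" d y, OF s_nonneg] scaled
    by simp
  show "x = y"
  proof (cases "disc_norm d x = 0")
    case True
    moreover have "disc_norm d y = 0"
      using True norm_eq by simp
    ultimately have "\<forall>i<d. x i = 0" "\<forall>i<d. y i = 0"
      by (simp_all add: disc_norm_eq_0_iff)
    with x y have "x i = 0 \<and> y i = 0" for i
      by (cases "i < d") (auto simp: disc_set_def)
    then show ?thesis
      by auto
  next
    case False
    then have "0 < s x"
      using disc_norm_nonneg[of d x] simplex_depth_nonneg[of d x] simplex_depth_eq_0_iff[of d x]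
      by (simp add: s_def)
    moreover have "s x = s y"
      using \<open>s x * disc_norm d x = s y * disc_norm d y\<close> norm_eq False by simp
    ultimately show ?thesis
      using scaled by (simp add: fun_eq_iff)
  qed
qed

lemma continuous_on_disc_norm: "continuous_on S (disc_norm d)"
  unfolding disc_norm_def by (intro continuous_intros)

lemma continuous_on_simplex_direction: "continuous_on S (\<lambda>x. simplex_direction d x i)"
  unfolding simplex_direction_def
  by (cases "i < d"; cases "i = d") (auto intro!: continuous_intros)

lemma continuous_on_simplex_depth: "continuous_on S (simplex_depth d)"
  unfolding simplex_depth_def
  by (rule continuous_on_Max_image) (auto intro!: continuous_intros continuous_on_simplex_direction)

lemma isCont_disc_to_simplex_quotient:
  assumes "i \<le> d"
  shows "isCont (\<lambda>x. disc_norm d x * simplex_direction d x i / simplex_depth d x) x0"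
proof -
  have norm: "isCont (disc_norm d) x0" and dir: "isCont (\<lambda>x. simplex_direction d x i) x0"
    and depth: "isCont (simplex_depth d) x0"
    using continuous_on_disc_norm[of UNIV d] continuous_on_simplex_direction[of UNIV d i]
      continuous_on_simplex_depth[of UNIV d]
    by (simp_all add: continuous_on_eq_continuous_at)
  show ?thesis
  proof (cases "simplex_depth d x0 = 0")
    case False
    then show ?thesis by (intro continuous_intros norm dir depth)
  next
    case True
    then have "disc_norm d x0 = 0"
      by (simp add: simplex_depth_eq_0_iff)
    have bound: "norm (disc_norm d x * simplex_direction d x i / simplex_depth d x)
        \<le> disc_norm d x * real (Suc d)" for x
    proof (cases "simplex_depth d x = 0")
      case False
      then have "\<bar>simplex_direction d x i\<bar> / simplex_depth d x \<le> real (Suc d)"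
        using abs_simplex_direction_le[OF assms, of x] simplex_depth_nonneg[of d x]
        by (simp add: divide_le_eq)
      then have "disc_norm d x * (\<bar>simplex_direction d x i\<bar> / simplex_depth d x)
          \<le> disc_norm d x * real (Suc d)"
        by (rule mult_left_mono) (rule disc_norm_nonneg)
      then show ?thesis
        using disc_norm_nonneg[of d x] simplex_depth_nonneg[of d x] by (simp add: abs_mult)
    qed (simp add: disc_norm_nonneg)
    have "((\<lambda>x. disc_norm d x * real (Suc d)) \<longlongrightarrow> 0) (at x0)"
      using norm \<open>disc_norm d x0 = 0\<close> by (auto simp: isCont_def intro: tendsto_mult_left_zero)
    then have "((\<lambda>x. disc_norm d x * simplex_direction d x i / simplex_depth d x) \<longlongrightarrow> 0) (at x0)"
      by (rule Lim_null_comparison[rotated]) (intro always_eventually allI bound)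
    then show ?thesis
      using True by (simp add: isCont_def)
  qed
qed

lemma continuous_on_disc_to_simplex: "continuous_on S (disc_to_simplex d)"
proof (rule continuous_on_coordinatewise_then_product)
  fix i
  show "continuous_on S (\<lambda>x. disc_to_simplex d x i)"
  proof (cases "i \<le> d")
    case True
    then show ?thesis
      unfolding disc_to_simplex_def
      by (auto intro!: continuous_at_imp_continuous_on continuous_intros
          isCont_disc_to_simplex_quotient)
  qed (simp add: disc_to_simplex_def)
qed

lemma closed_disc_set: "closed (disc_set d)"
proof -
  have "disc_set d = {x. (\<Sum>i<d. (x i)\<^sup>2) \<le> 1} \<inter> (\<Inter>i\<in>{d..}. {x. x i = 0})"
    by (auto simp: disc_set_def)
  moreover have "closed {x::nat \<Rightarrow> real. (\<Sum>i<d. (x i)\<^sup>2) \<le> 1}"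
    by (rule closed_Collect_le) (auto intro!: continuous_intros)
  moreover have "closed {x::nat \<Rightarrow> real. x i = 0}" for i
    by (rule closed_Collect_eq) (auto intro!: continuous_intros)
  ultimately show ?thesis by (metis closed_INT closed_Int)
qed

lemma compact_disc_set: "compact (disc_set d)"
proof -
  define P where "P = PiE UNIV (\<lambda>i. if i < d then {-1..1::real} else {0})"
  have "compactin (product_topology (\<lambda>i. euclideanreal) UNIV) P"
    unfolding P_def by (subst compactin_PiE) (auto simp: compactin_euclidean_iff)
  then have "compact P"
    by (simp add: euclidean_product_topology compactin_euclidean_iff)
  moreover have "disc_set d \<subseteq> P"
  proof
    fix x assume x: "x \<in> disc_set d"
    have "\<bar>x i\<bar> \<le> 1" if "i < d" for i
    proof -
      have "(x i)\<^sup>2 \<le> (\<Sum>j<d. (x j)\<^sup>2)"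
        using that by (intro member_le_sum) auto
      also have "\<dots> \<le> 1"
        using x by (simp add: disc_set_def)
      finally show ?thesis
        by (simp add: abs_square_le_1)
    qed
    then show "x \<in> P"
      using x by (auto simp: P_def disc_set_def abs_le_iff)
  qed
  ultimately show ?thesis
    using compact_Int_closed[OF _ closed_disc_set] by (metis inf.absorb2)
qed

section \<open>Realisations of abstract complexes as CW complexes\<close>

definition realization :: "nat \<Rightarrow> (nat set \<Rightarrow> bool) \<Rightarrow> (nat \<Rightarrow> real) set" where
  "realization N face =
     {y. (\<forall>i. 0 \<le> y i) \<and> (\<forall>i\<ge>N. y i = 0) \<and> (\<Sum>i<N. y i) = 1 \<and> face {i. y i \<noteq> 0}}"

text \<open>Coordinate \<open>t\<close> of \<open>z\<close> is placed at the \<open>t\<close>-th smallest element of \<open>I\<close>.\<close>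

definition face_embedding :: "nat set \<Rightarrow> (nat \<Rightarrow> real) \<Rightarrow> nat \<Rightarrow> real" where
  "face_embedding I z j =
     (if j \<in> I then z (inv_into {..<card I} ((!) (sorted_list_of_set I)) j) else 0)"

lemma bij_betw_nth_sorted_list_of_set:
  "finite I \<Longrightarrow> bij_betw ((!) (sorted_list_of_set I)) {..<card I} I"
  by (rule bij_betw_nth) simp_all

lemma face_embedding_nth:
  assumes "finite I" "t < card I"
  shows "face_embedding I z (sorted_list_of_set I ! t) = z t"
  using bij_betw_nth_sorted_list_of_set[OF assms(1)] assms(2)
  by (auto simp: face_embedding_def bij_betw_inv_into_left bij_betwE)

lemma obtain_index_sorted_list_of_set:
  assumes "finite I" "j \<in> I"
  obtains t where "t < card I" "j = sorted_list_of_set I ! t"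
  using bij_betw_nth_sorted_list_of_set[OF assms(1)] assms(2)
  by (metis bij_betw_iff_bijections lessThan_iff)

lemma continuous_on_face_embedding: "continuous_on S (face_embedding I)"
proof (rule continuous_on_coordinatewise_then_product)
  fix j show "continuous_on S (\<lambda>z. face_embedding I z j)"
    unfolding face_embedding_def by (cases "j \<in> I") (simp_all add: continuous_on_coordinate)
qed

lemma support_face_embedding:
  assumes "finite I"
  shows "{j. face_embedding I z j \<noteq> 0} = (!) (sorted_list_of_set I) ` {t. t < card I \<and> z t \<noteq> 0}"
proof (intro set_eqI iffI)
  fix j assume "j \<in> {j. face_embedding I z j \<noteq> 0}"
  then have "j \<in> I"
    by (auto simp: face_embedding_def split: if_splits)
  with assms obtain t where "t < card I" "j = sorted_list_of_set I ! t"
    by (rule obtain_index_sorted_list_of_set)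
  with \<open>j \<in> {j. face_embedding I z j \<noteq> 0}\<close> assms
  show "j \<in> (!) (sorted_list_of_set I) ` {t. t < card I \<and> z t \<noteq> 0}"
    by (auto simp: face_embedding_nth)
qed (use assms in \<open>auto simp: face_embedding_nth\<close>)

lemma inj_on_face_embedding:
  assumes "finite I" "I \<noteq> {}" shows "inj_on (face_embedding I) (std_simplex (card I - 1))"
proof (rule inj_onI)
  fix z w assume z: "z \<in> std_simplex (card I - 1)" and w: "w \<in> std_simplex (card I - 1)"
    and eq: "face_embedding I z = face_embedding I w"
  have "z t = w t" for t
  proof (cases "t < card I")
    case True
    then show ?thesis
      using eq face_embedding_nth[OF assms(1) True] by metis
  next
    case False
    moreover have "0 < card I"
      using assms by (simp add: card_gt_0_iff)
    ultimately have "card I - 1 < t"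
      by linarith
    then show ?thesis
      using z w by (simp add: std_simplex_def)
  qed
  then show "z = w" ..
qed

definition characteristic_map :: "nat set \<Rightarrow> (nat \<Rightarrow> real) \<Rightarrow> nat \<Rightarrow> real" where
  "characteristic_map I = face_embedding I \<circ> disc_to_simplex (card I - 1)"

lemma open_disc_subset_disc: "open_disc_set d \<subseteq> disc_set d"
  by (auto simp: open_disc_set_def disc_set_def)

lemma sphere_subset_disc: "sphere_set d \<subseteq> disc_set d"
  by (auto simp: sphere_set_def disc_set_def)

lemma continuous_on_characteristic_map: "continuous_on S (characteristic_map I)"
  unfolding characteristic_map_def
  by (rule continuous_on_compose[OF continuous_on_disc_to_simplex continuous_on_face_embedding])

lemma homeomorphic_map_characteristic_map:
  assumes "finite I" "I \<noteq> {}"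
  defines "d \<equiv> card I - 1"
  shows "homeomorphic_map (top_of_set (open_disc_set d))
           (top_of_set (characteristic_map I ` open_disc_set d)) (characteristic_map I)"
proof -
  have "inj_on (face_embedding I) (disc_to_simplex d ` disc_set d)"
    using inj_on_face_embedding[OF assms(1,2)] disc_to_simplex_in_std_simplex
    by (auto simp: d_def intro: inj_on_subset)
  then have "inj_on (characteristic_map I) (disc_set d)"
    unfolding characteristic_map_def d_def using inj_on_disc_to_simplex by (intro comp_inj_on)
  then obtain g where "homeomorphism (disc_set d) (characteristic_map I ` disc_set d) (characteristic_map I) g"
    using homeomorphism_compact[OF compact_disc_set continuous_on_characteristic_map] by blast
  then have "homeomorphism (open_disc_set d) (characteristic_map I ` open_disc_set d) (characteristic_map I) g"
    by (rule homeomorphism_of_subsets) (use open_disc_subset_disc in auto)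
  then show ?thesis
    unfolding homeomorphic_map_maps homeomorphic_maps_def by (auto simp: homeomorphism_def)
qed

locale abstract_complex =
  fixes N :: nat and face :: "nat set \<Rightarrow> bool"
  assumes face_subset: "face I \<Longrightarrow> I \<subseteq> {..<N}"
    and face_downward_closed: "face I \<Longrightarrow> J \<subseteq> I \<Longrightarrow> face J"
begin

lemma finite_face: "face I \<Longrightarrow> finite I"
  using face_subset finite_subset by blast

lemma sum_face_embedding:
  assumes "face I" "I \<noteq> {}"
  shows "(\<Sum>j<N. face_embedding I z j) = (\<Sum>t\<le>card I - 1. z t)"
proof -
  have fin: "finite I" using finite_face[OF assms(1)] .
  then have "0 < card I"
    using assms(2) by (simp add: card_gt_0_iff)
  then have atMost: "{..<card I} = {..card I - 1}"
    by auto
  have "(\<Sum>j<N. face_embedding I z j) = (\<Sum>j\<in>I. face_embedding I z j)"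
    using face_subset[OF assms(1)] by (intro sum.mono_neutral_right) (auto simp: face_embedding_def)
  also have "\<dots> = (\<Sum>t<card I. face_embedding I z (sorted_list_of_set I ! t))"
    using bij_betw_nth_sorted_list_of_set[OF fin] by (simp add: sum.reindex_bij_betw)
  also have "\<dots> = (\<Sum>t<card I. z t)"
    using fin by (simp add: face_embedding_nth)
  also have "\<dots> = (\<Sum>t\<le>card I - 1. z t)"
    unfolding atMost ..
  finally show ?thesis .
qed

lemma face_embedding_in_realization:
  assumes "face I" "I \<noteq> {}" "z \<in> std_simplex (card I - 1)"
  shows "face_embedding I z \<in> realization N face"
proof -
  have "{j. face_embedding I z j \<noteq> 0} \<subseteq> I"
    by (auto simp: face_embedding_def)
  then have "face {j. face_embedding I z j \<noteq> 0}"
    using assms(1) face_downward_closed by blast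
  moreover have "\<forall>j. 0 \<le> face_embedding I z j"
    using assms(3) by (simp add: face_embedding_def std_simplex_def)
  moreover have "\<forall>j\<ge>N. face_embedding I z j = 0"
    using face_subset[OF assms(1)] by (auto simp: face_embedding_def)
  moreover have "(\<Sum>j<N. face_embedding I z j) = 1"
    using sum_face_embedding[OF assms(1,2)] assms(3) by (simp add: std_simplex_def)
  ultimately show ?thesis
    by (simp add: realization_def)
qed

lemma support_face_embedding_open:
  assumes "face I" "I \<noteq> {}" "z \<in> std_open_simplex (card I - 1)"
  shows "{j. face_embedding I z j \<noteq> 0} = I"
proof -
  have fin: "finite I" using finite_face[OF assms(1)] .
  have "0 < z t" if "t < card I" for t
  proof -
    have "t \<le> card I - 1" using that by linarith
    then show ?thesis using assms(3) by (simp add: std_open_simplex_def)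
  qed
  then have "{t. t < card I \<and> z t \<noteq> 0} = {..<card I}"
    by force
  then show ?thesis
    using support_face_embedding[OF fin, of z] bij_betw_nth_sorted_list_of_set[OF fin]
    by (simp add: bij_betw_def)
qed

lemma support_face_embedding_boundary:
  assumes "face I" "I \<noteq> {}" "z \<in> std_simplex (card I - 1)" "z \<notin> std_open_simplex (card I - 1)"
  shows "{j. face_embedding I z j \<noteq> 0} \<subset> I"
proof -
  have fin: "finite I" using finite_face[OF assms(1)] .
  obtain t where t: "t \<le> card I - 1" "\<not> 0 < z t"
    using assms(3,4) by (auto simp: std_open_simplex_def)
  moreover have "0 \<le> z t"
    using assms(3) by (simp add: std_simplex_def)
  ultimately have "z t = 0"
    by simp
  have "0 < card I"
    using fin assms(2) by (simp add: card_gt_0_iff)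
  with t have "t < card I"
    by linarith
  then have "sorted_list_of_set I ! t \<in> I - {j. face_embedding I z j \<noteq> 0}"
    using \<open>z t = 0\<close> bij_betw_nth_sorted_list_of_set[OF fin] face_embedding_nth[OF fin]
    by (auto dest: bij_betwE)
  then show ?thesis
    by (auto simp: face_embedding_def split: if_splits)
qed

lemma support_in_realization:
  assumes "y \<in> realization N face" shows "face {j. y j \<noteq> 0}" "{j. y j \<noteq> 0} \<noteq> {}"
proof -
  show "face {j. y j \<noteq> 0}"
    using assms by (simp add: realization_def)
  show "{j. y j \<noteq> 0} \<noteq> {}"
  proof
    assume "{j. y j \<noteq> 0} = {}"
    then have "(\<Sum>i<N. y i) = 0" by auto
    with assms show False by (simp add: realization_def)
  qed
qed

lemma face_embedding_onto:
  assumes y: "y \<in> realization N face" and I: "{j. y j \<noteq> 0} = I"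
  shows "\<exists>z\<in>std_open_simplex (card I - 1). face_embedding I z = y"
proof -
  have face: "face I" and ne: "I \<noteq> {}"
    using support_in_realization[OF y] I by auto
  have fin: "finite I" using finite_face[OF face] .
  define z where "z t = (if t < card I then y (sorted_list_of_set I ! t) else 0)" for t
  have "face_embedding I z j = y j" for j
  proof (cases "j \<in> I")
    case True
    with fin obtain t where "t < card I" "j = sorted_list_of_set I ! t"
      by (rule obtain_index_sorted_list_of_set)
    then show ?thesis
      using face_embedding_nth[OF fin] by (simp add: z_def)
  qed (use I in \<open>auto simp: face_embedding_def\<close>)
  then have emb: "face_embedding I z = y" ..
  have "0 < z t" if "t \<le> card I - 1" for t
  proof -
    have "0 < card I"
      using fin ne by (simp add: card_gt_0_iff)
    then have "t < card I"
      using that by linarith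
    then have "z t \<noteq> 0" "0 \<le> z t"
      using bij_betw_nth_sorted_list_of_set[OF fin] I y
      by (auto simp: z_def realization_def dest: bij_betwE)
    then show ?thesis by simp
  qed
  moreover have "(\<Sum>t\<le>card I - 1. z t) = 1"
    using sum_face_embedding[OF face ne, of z] emb y by (simp add: realization_def)
  moreover have "card I - 1 < t \<Longrightarrow> z t = 0" for t
    by (simp add: z_def)
  moreover have "0 \<le> z t" for t
    using y by (simp add: z_def realization_def)
  ultimately have "z \<in> std_open_simplex (card I - 1)"
    by (simp add: std_open_simplex_def std_simplex_def)
  with emb show ?thesis by blast
qed

lemma characteristic_map_in_realization:
  assumes "face I" "I \<noteq> {}" "x \<in> disc_set (card I - 1)"
  shows "characteristic_map I x \<in> realization N face"
  using face_embedding_in_realization[OF assms(1,2) disc_to_simplex_in_std_simplex[OF assms(3)]]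
  by (simp add: characteristic_map_def)

lemma characteristic_map_open_cell:
  assumes "face I" "I \<noteq> {}"
  shows "characteristic_map I ` open_disc_set (card I - 1) = {y \<in> realization N face. {j. y j \<noteq> 0} = I}"
proof (intro set_eqI iffI)
  fix y assume "y \<in> characteristic_map I ` open_disc_set (card I - 1)"
  then obtain x where x: "x \<in> open_disc_set (card I - 1)" "y = characteristic_map I x"
    by blast
  then show "y \<in> {y \<in> realization N face. {j. y j \<noteq> 0} = I}"
    using characteristic_map_in_realization[OF assms] open_disc_subset_disc
      support_face_embedding_open[OF assms disc_to_simplex_in_std_open_simplex]
    by (auto simp: characteristic_map_def)
next
  fix y assume y: "y \<in> {y \<in> realization N face. {j. y j \<noteq> 0} = I}"
  then obtain z where z: "z \<in> std_open_simplex (card I - 1)" "face_embedding I z = y"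
    using face_embedding_onto by blast
  then obtain x where "x \<in> open_disc_set (card I - 1)" "disc_to_simplex (card I - 1) x = z"
    using disc_to_simplex_onto by blast
  with z show "y \<in> characteristic_map I ` open_disc_set (card I - 1)"
    by (auto simp: characteristic_map_def)
qed

lemma support_characteristic_map_sphere:
  assumes "face I" "I \<noteq> {}" "x \<in> sphere_set (card I - 1)"
  shows "{j. characteristic_map I x j \<noteq> 0} \<subset> I"
proof -
  have "disc_to_simplex (card I - 1) x \<in> std_simplex (card I - 1)"
    using assms(3) sphere_subset_disc disc_to_simplex_in_std_simplex by blast
  moreover have "disc_to_simplex (card I - 1) x \<notin> std_open_simplex (card I - 1)"
    using assms(3) by (rule disc_to_simplex_sphere)
  ultimately show ?thesis
    using support_face_embedding_boundary[OF assms(1,2)] by (simp add: characteristic_map_def)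
qed

lemma homeomorphic_map_open_cell:
  assumes "face I" "I \<noteq> {}"
  shows "homeomorphic_map (top_of_set (open_disc_set (card I - 1)))
    (subtopology (top_of_set (realization N face)) (characteristic_map I ` open_disc_set (card I - 1)))
    (characteristic_map I)"
proof -
  have "realization N face \<inter> characteristic_map I ` open_disc_set (card I - 1)
      = characteristic_map I ` open_disc_set (card I - 1)"
    using characteristic_map_open_cell[OF assms] by auto
  then show ?thesis
    using homeomorphic_map_characteristic_map[OF finite_face[OF assms(1)] assms(2)]
    by (simp add: subtopology_subtopology)
qed

lemma realization_Union_open_cells:
  "realization N face = (\<Union>I\<in>{I. face I \<and> I \<noteq> {}}. characteristic_map I ` open_disc_set (card I - 1))"
  using characteristic_map_open_cell support_in_realization by auto

lemma characteristic_map_sphere_lower_cell: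
  assumes "face I" "I \<noteq> {}" "x \<in> sphere_set (card I - 1)"
  obtains J where "face J" "J \<noteq> {}" "card J < card I"
    "characteristic_map I x \<in> characteristic_map J ` open_disc_set (card J - 1)"
proof -
  let ?y = "characteristic_map I x"
  have y: "?y \<in> realization N face"
    using characteristic_map_in_realization[OF assms(1,2)] assms(3) sphere_subset_disc by blast
  then have "face {j. ?y j \<noteq> 0}" "{j. ?y j \<noteq> 0} \<noteq> {}"
    by (rule support_in_realization)+
  moreover have "card {j. ?y j \<noteq> 0} < card I"
    using support_characteristic_map_sphere[OF assms] finite_face[OF assms(1)] by (rule psubset_card_mono[rotated])
  moreover have "?y \<in> characteristic_map {j. ?y j \<noteq> 0} ` open_disc_set (card {j. ?y j \<noteq> 0} - 1)"
    using characteristic_map_open_cell calculation(1,2) y by blast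
  ultimately show ?thesis
    by (rule that)
qed

theorem realization_finite_CW_complex:
  assumes dim: "\<And>I. face I \<Longrightarrow> card I \<le> Suc m"
  shows "finite_CW_complex_dim (subtopology (powertop_real UNIV) (realization N face)) m"
proof -
  define faces where "faces = {I. face I \<and> I \<noteq> {}}"
  have "finite faces"
    by (rule finite_subset[of _ "Pow {..<N}"]) (use face_subset in \<open>auto simp: faces_def\<close>)
  then obtain k and F :: "nat \<Rightarrow> nat set" where F: "bij_betw F {..<k} faces"
    using ex_bij_betw_nat_finite lessThan_atLeast0 by metis
  define d where "d i = card (F i) - 1" for i
  have face: "face (F i)" "F i \<noteq> {}" if "i < k" for i
    using F that by (auto simp: faces_def dest: bij_betwE)
  have cell: "characteristic_map (F i) ` open_disc_set (d i) = {y \<in> realization N face. {j. y j \<noteq> 0} = F i}"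
    if "i < k" for i
    using characteristic_map_open_cell[OF face[OF that]] by (simp add: d_def)
  have F_onto: "F ` {..<k} = faces"
    using F by (simp add: bij_betw_def)
  have top: "subtopology (powertop_real UNIV) S = top_of_set S" for S :: "(nat \<Rightarrow> real) set"
    by (simp add: euclidean_product_topology)
  show ?thesis
    unfolding finite_CW_complex_dim_def top
  proof (intro conjI exI[of _ k] exI[of _ d] exI[of _ "\<lambda>i. characteristic_map (F i)"] allI impI)
    show "Hausdorff_space (top_of_set (realization N face))"
      by (simp add: Hausdorff_space_subtopology)
    show "d i \<le> m" if "i < k" for i
      using dim[OF face(1)[OF that]] by (simp add: d_def)
    show "continuous_map (top_of_set (disc_set (d i))) (top_of_set (realization N face))
        (characteristic_map (F i))" if "i < k" for i
      using characteristic_map_in_realization[OF face[OF that]] continuous_on_characteristic_map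
      by (auto simp: d_def)
    show "homeomorphic_map (top_of_set (open_disc_set (d i)))
        (subtopology (top_of_set (realization N face)) (characteristic_map (F i) ` open_disc_set (d i)))
        (characteristic_map (F i))"
      if "i < k" for i
      using homeomorphic_map_open_cell[OF face[OF that]] by (simp add: d_def)
    show "characteristic_map (F i) ` open_disc_set (d i) \<inter> characteristic_map (F j) ` open_disc_set (d j) = {}"
      if "i < k" "j < k" "i \<noteq> j" for i j
      using that cell inj_onD[OF bij_betw_imp_inj_on[OF F]] by auto
    show "(\<Union>i<k. characteristic_map (F i) ` open_disc_set (d i)) = topspace (top_of_set (realization N face))"
      unfolding realization_Union_open_cells topspace_subtopology F_onto[unfolded faces_def, symmetric]
      by (simp add: d_def image_image)
    show "characteristic_map (F i) ` sphere_set (d i)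
        \<subseteq> (\<Union>j\<in>{j. j < k \<and> d j < d i}. characteristic_map (F j) ` open_disc_set (d j))"
      if i: "i < k" for i
    proof
      fix y assume "y \<in> characteristic_map (F i) ` sphere_set (d i)"
      then obtain J where J: "face J" "J \<noteq> {}" "card J < card (F i)"
        "y \<in> characteristic_map J ` open_disc_set (card J - 1)"
        using characteristic_map_sphere_lower_cell[OF face[OF i]] by (auto simp: d_def)
      have "J \<in> F ` {..<k}"
        using F_onto J(1,2) by (simp add: faces_def)
      then obtain j where "j < k" "F j = J"
        by auto
      moreover have "0 < card J"
        using J(1,2) finite_face by (simp add: card_gt_0_iff)
      with J(3) \<open>F j = J\<close> have "d j < d i"
        by (simp add: d_def)
      ultimately show "y \<in> (\<Union>j\<in>{j. j < k \<and> d j < d i}. characteristic_map (F j) ` open_disc_set (d j))"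
        using J(4) by (auto simp: d_def)
    qed
  qed
qed

end

section \<open>Barycentric coordinates in a simplicial complex\<close>

lemma affine_combination_translate:
  fixes v0 :: "'a::real_vector"
  assumes "finite C" "v0 \<in> C" "sum u C = 1"
  shows "- v0 + (\<Sum>v\<in>C. u v *\<^sub>R v) = (\<Sum>v\<in>C - {v0}. u v *\<^sub>R (- v0 + v))"
proof -
  have "(\<Sum>v\<in>C. u v *\<^sub>R (- v0 + v)) = (\<Sum>v\<in>C. u v *\<^sub>R v) - sum u C *\<^sub>R v0"
    by (simp add: algebra_simps sum_subtractf scaleR_sum_left)
  then have "- v0 + (\<Sum>v\<in>C. u v *\<^sub>R v) = (\<Sum>v\<in>C. u v *\<^sub>R (- v0 + v))"
    using assms(3) by simp
  also have "\<dots> = (\<Sum>v\<in>C - {v0}. u v *\<^sub>R (- v0 + v))"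
    using assms(1,2) by (simp add: sum.remove)
  finally show ?thesis .
qed

lemma affine_coordinate_continuous:
  fixes C :: "'a::euclidean_space set"
  assumes "finite C" "\<not> affine_dependent C" "w \<in> C"
  obtains f where "continuous_on UNIV f" "\<And>u. sum u C = 1 \<Longrightarrow> f (\<Sum>v\<in>C. u v *\<^sub>R v) = u w"
proof (cases "C = {w}")
  case True
  then show ?thesis
    using that[of "\<lambda>_. 1"] by simp
next
  case False
  then obtain v0 where v0: "v0 \<in> C" "v0 \<noteq> w"
    using assms(3) by blast
  define C' where "C' = C - {v0}"
  have C: "C = insert v0 C'" "v0 \<notin> C'" "w \<in> C'" "finite C'"
    using v0 assms(1,3) by (auto simp: C'_def)
  have "\<not> affine_dependent (insert v0 C')"
    using assms(2) C(1) by simp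
  then have "independent ((\<lambda>v. - v0 + v) ` C')"
    using affine_dependent_iff_dependent[OF C(2)] by simp
  then have "\<exists>g. linear g \<and>
      (\<forall>y\<in>(\<lambda>v. - v0 + v) ` C'. g y = (if y = - v0 + w then 1 else (0::real)))"
    by (rule linear_independent_extend)
  then obtain g :: "'a \<Rightarrow> real" where g: "linear g"
    "\<And>y. y \<in> (\<lambda>v. - v0 + v) ` C' \<Longrightarrow> g y = (if y = - v0 + w then 1 else 0)"
    by blast
  show ?thesis
  proof (rule that)
    have "bounded_linear g"
      using g(1) by (simp add: linear_conv_bounded_linear)
    then show "continuous_on UNIV (\<lambda>x. g (- v0 + x))"
      by (rule continuous_on_compose2[OF linear_continuous_on]) (auto intro: continuous_intros)
    fix u :: "'a \<Rightarrow> real" assume "sum u C = 1"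
    then have "g (- v0 + (\<Sum>v\<in>C. u v *\<^sub>R v)) = (\<Sum>v\<in>C'. u v * g (- v0 + v))"
      using affine_combination_translate[OF assms(1) v0(1)] g(1)
      by (simp add: C'_def linear_sum linear_scale)
    also have "\<dots> = (\<Sum>v\<in>C'. if v = w then u v else 0)"
      using g(2) by (intro sum.cong) auto
    finally show "g (- v0 + (\<Sum>v\<in>C. u v *\<^sub>R v)) = u w"
      using C by simp
  qed
qed

definition simplex_vertices :: "'a::euclidean_space set \<Rightarrow> 'a set" where
  "simplex_vertices S = {v. v extreme_point_of S}"

definition barycentric_coords ::
  "'a::euclidean_space set \<Rightarrow> 'a \<Rightarrow> ('a \<Rightarrow> real) \<Rightarrow> bool" where
  "barycentric_coords S x u \<longleftrightarrow>
     (\<forall>v. v \<notin> simplex_vertices S \<longrightarrow> u v = 0) \<and> (\<forall>v. 0 \<le> u v) \<and>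
     sum u (simplex_vertices S) = 1 \<and> (\<Sum>v\<in>simplex_vertices S. u v *\<^sub>R v) = x"

lemma simplex_vertices_convex_hull:
  "\<not> affine_dependent C \<Longrightarrow> simplex_vertices (convex hull C) = C"
  by (auto simp: simplex_vertices_def extreme_point_of_convex_hull_affine_independent)

lemma simplex_vertices:
  assumes "n simplex S"
  shows "finite (simplex_vertices S)" "\<not> affine_dependent (simplex_vertices S)"
    "convex hull (simplex_vertices S) = S" "int (card (simplex_vertices S)) = n + 1"
proof -
  obtain C where "finite C" "\<not> affine_dependent C" "int (card C) = n + 1" "S = convex hull C"
    using assms by (auto simp: simplex)
  moreover from this have "simplex_vertices S = C"
    by (simp add: simplex_vertices_convex_hull)
  ultimately show "finite (simplex_vertices S)" "\<not> affine_dependent (simplex_vertices S)"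
    "convex hull (simplex_vertices S) = S" "int (card (simplex_vertices S)) = n + 1"
    by auto
qed

lemma affine_coords_unique:
  fixes C :: "'a::euclidean_space set"
  assumes "finite C" "\<not> affine_dependent C"
    and "\<forall>v. v \<notin> C \<longrightarrow> u v = 0" "\<forall>v. v \<notin> C \<longrightarrow> w v = 0"
    and "sum u C = 1" "sum w C = 1" "(\<Sum>v\<in>C. u v *\<^sub>R v) = (\<Sum>v\<in>C. w v *\<^sub>R v)"
  shows "u = w"
proof -
  have "sum (\<lambda>v. u v - w v) C = 0" "(\<Sum>v\<in>C. (u v - w v) *\<^sub>R v) = 0"
    using assms(5-7) by (simp_all add: sum_subtractf scaleR_diff_left)
  then have "\<forall>v\<in>C. u v - w v = 0"
    using assms(2) affine_dependent_explicit_finite[OF assms(1)] by blast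
  with assms(3,4) show ?thesis
    by (auto simp: fun_eq_iff)
qed

lemma barycentric_coords_unique:
  assumes "n simplex S" "barycentric_coords S x u" "barycentric_coords S x w" shows "u = w"
  using assms simplex_vertices[OF assms(1)] unfolding barycentric_coords_def
  by (intro affine_coords_unique[of "simplex_vertices S"]) auto

lemma barycentric_coords_on_face:
  assumes "n simplex S" "C \<subseteq> simplex_vertices S" "x \<in> convex hull C"
  shows "\<exists>u. barycentric_coords S x u \<and> (\<forall>v. v \<notin> C \<longrightarrow> u v = 0)"
proof -
  note vertices = simplex_vertices[OF assms(1)]
  have "finite C"
    using vertices(1) assms(2) finite_subset by blast
  then obtain u where u: "\<forall>v\<in>C. 0 \<le> u v" "sum u C = 1" "(\<Sum>v\<in>C. u v *\<^sub>R v) = x"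
    using assms(3) convex_hull_finite[of C] by auto
  define u' where "u' v = (if v \<in> C then u v else 0)" for v
  have "sum u' (simplex_vertices S) = sum u' C"
    using assms(2) vertices(1) by (intro sum.mono_neutral_right) (auto simp: u'_def)
  moreover have "(\<Sum>v\<in>simplex_vertices S. u' v *\<^sub>R v) = (\<Sum>v\<in>C. u' v *\<^sub>R v)"
    using assms(2) vertices(1) by (intro sum.mono_neutral_right) (auto simp: u'_def)
  ultimately have "barycentric_coords S x u'"
    using u assms(2) by (auto simp: barycentric_coords_def u'_def)
  then show ?thesis
    by (auto simp: u'_def)
qed

lemma barycentric_coords_exist:
  assumes "n simplex S" "x \<in> S" shows "\<exists>u. barycentric_coords S x u"
  using barycentric_coords_on_face[OF assms(1) order_refl, of x] simplex_vertices(3)[OF assms(1)] assms(2)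
  by auto

lemma barycentric_coords_mem:
  assumes "n simplex S" "barycentric_coords S x u" shows "x \<in> S"
proof -
  note vertices = simplex_vertices[OF assms(1)]
  have "x \<in> convex hull (simplex_vertices S)"
    unfolding convex_hull_finite[OF vertices(1)] using assms(2) by (auto simp: barycentric_coords_def)
  with vertices(3) show ?thesis by simp
qed

lemma barycentric_coords_rel_interior:
  assumes "n simplex S" "x \<in> rel_interior S"
  obtains u where "barycentric_coords S x u" "\<And>v. v \<in> simplex_vertices S \<Longrightarrow> 0 < u v"
proof -
  note vertices = simplex_vertices[OF assms(1)]
  have "x \<in> rel_interior (convex hull (simplex_vertices S))"
    using assms(2) by (simp add: vertices(3))
  then obtain u where u: "\<forall>v\<in>simplex_vertices S. 0 < u v" "sum u (simplex_vertices S) = 1"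
    "(\<Sum>v\<in>simplex_vertices S. u v *\<^sub>R v) = x"
    using rel_interior_convex_hull_explicit[OF vertices(2)] by blast
  define u' where "u' v = (if v \<in> simplex_vertices S then u v else 0)" for v
  have "barycentric_coords S x u'"
    using u by (auto simp: barycentric_coords_def u'_def less_imp_le)
  with u(1) show ?thesis
    by (auto intro: that simp: u'_def)
qed

lemma barycentric_coords_restrict:
  assumes "n simplex S" "barycentric_coords S x u" "C \<subseteq> simplex_vertices S"
    and "\<forall>v. v \<notin> C \<longrightarrow> u v = 0"
  shows "sum u C = 1" "(\<Sum>v\<in>C. u v *\<^sub>R v) = x"
proof -
  have "finite (simplex_vertices S)"
    using simplex_vertices(1)[OF assms(1)] .
  then have "sum u (simplex_vertices S) = sum u C"
    "(\<Sum>v\<in>simplex_vertices S. u v *\<^sub>R v) = (\<Sum>v\<in>C. u v *\<^sub>R v)"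
    using assms(3,4) by (auto intro: sum.mono_neutral_right)
  with assms(2) show "sum u C = 1" "(\<Sum>v\<in>C. u v *\<^sub>R v) = x"
    by (auto simp: barycentric_coords_def)
qed

definition bary_coords :: "'a::euclidean_space set set \<Rightarrow> 'a \<Rightarrow> 'a \<Rightarrow> real" where
  "bary_coords B x = (SOME u. \<exists>S\<in>B. barycentric_coords S x u)"

context
  fixes B :: "'a::euclidean_space set set"
  assumes complex: "simplicial_complex B"
begin

lemma simplex_in_complex: "S \<in> B \<Longrightarrow> \<exists>n. n simplex S"
  using complex by (simp add: simplicial_complex_def)

lemma Int_simplices_convex_hull_common_vertices:
  assumes S: "S \<in> B" and T: "T \<in> B"
  obtains C where "C \<subseteq> simplex_vertices S" "C \<subseteq> simplex_vertices T" "S \<inter> T = convex hull C"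
proof -
  obtain n n' where n: "n simplex S" and n': "n' simplex T"
    using simplex_in_complex S T by blast
  note vS = simplex_vertices[OF n] and vT = simplex_vertices[OF n']
  have "(S \<inter> T) face_of S" "(T \<inter> S) face_of T"
    using complex S T by (auto simp: simplicial_complex_def)
  then have "(S \<inter> T) face_of convex hull (simplex_vertices S)"
    "(S \<inter> T) face_of convex hull (simplex_vertices T)"
    by (simp_all add: vS(3) vT(3) Int_commute)
  then have "\<exists>C. C \<subseteq> simplex_vertices S \<and> S \<inter> T = convex hull C"
    "\<exists>C. C \<subseteq> simplex_vertices T \<and> S \<inter> T = convex hull C"
    using face_of_convex_hull_affine_independent[OF vS(2)]
      face_of_convex_hull_affine_independent[OF vT(2)] by simp_all
  then obtain C C' where C: "C \<subseteq> simplex_vertices S" "S \<inter> T = convex hull C"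
    and C': "C' \<subseteq> simplex_vertices T" "S \<inter> T = convex hull C'"
    by blast
  have "simplex_vertices (S \<inter> T) = C"
    unfolding C(2) by (rule simplex_vertices_convex_hull[OF affine_independent_subset[OF vS(2) C(1)]])
  moreover have "simplex_vertices (S \<inter> T) = C'"
    unfolding C'(2) by (rule simplex_vertices_convex_hull[OF affine_independent_subset[OF vT(2) C'(1)]])
  ultimately show ?thesis
    using that C C' by simp
qed

lemma barycentric_coords_compatible:
  assumes S: "S \<in> B" and T: "T \<in> B"
    and u: "barycentric_coords S x u" and w: "barycentric_coords T x w"
  shows "u = w"
proof -
  obtain n n' where n: "n simplex S" and n': "n' simplex T"
    using simplex_in_complex S T by blast
  obtain C where C: "C \<subseteq> simplex_vertices S" "C \<subseteq> simplex_vertices T" "S \<inter> T = convex hull C"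
    using Int_simplices_convex_hull_common_vertices[OF S T] .
  have "x \<in> convex hull C"
    using barycentric_coords_mem[OF n u] barycentric_coords_mem[OF n' w] C(3) by blast
  obtain u' where u': "barycentric_coords S x u'" "\<forall>v. v \<notin> C \<longrightarrow> u' v = 0"
    using barycentric_coords_on_face[OF n C(1) \<open>x \<in> convex hull C\<close>] by blast
  obtain w' where w': "barycentric_coords T x w'" "\<forall>v. v \<notin> C \<longrightarrow> w' v = 0"
    using barycentric_coords_on_face[OF n' C(2) \<open>x \<in> convex hull C\<close>] by blast
  note su = barycentric_coords_restrict[OF n u'(1) C(1) u'(2)]
  note sw = barycentric_coords_restrict[OF n' w'(1) C(2) w'(2)]
  have "finite C" "\<not> affine_dependent C"
    using simplex_vertices(1,2)[OF n] C(1) finite_subset affine_independent_subset by blast+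
  then have "u' = w'"
    using affine_coords_unique[OF _ _ u'(2) w'(2) su(1) sw(1)] su(2) sw(2) by simp
  moreover have "u = u'" "w = w'"
    using barycentric_coords_unique[OF n u u'(1)] barycentric_coords_unique[OF n' w w'(1)] .
  ultimately show ?thesis
    by simp
qed

lemma bary_coords_eq: "S \<in> B \<Longrightarrow> barycentric_coords S x u \<Longrightarrow> bary_coords B x = u"
  unfolding bary_coords_def
  by (rule someI2_ex) (auto intro: barycentric_coords_compatible)

lemma barycentric_coords_bary_coords:
  "S \<in> B \<Longrightarrow> x \<in> S \<Longrightarrow> barycentric_coords S x (bary_coords B x)"
  using barycentric_coords_exist simplex_in_complex bary_coords_eq by metis

lemma bary_coords_rel_interior:
  assumes "S \<in> B" "x \<in> rel_interior S"
  shows "v \<in> simplex_vertices S \<Longrightarrow> 0 < bary_coords B x v"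
    and "v \<notin> simplex_vertices S \<Longrightarrow> bary_coords B x v = 0"
proof -
  obtain n where n: "n simplex S"
    using simplex_in_complex assms(1) by blast
  then obtain u where "barycentric_coords S x u" "\<And>v. v \<in> simplex_vertices S \<Longrightarrow> 0 < u v"
    using barycentric_coords_rel_interior assms(2) by blast
  moreover from this have "bary_coords B x = u"
    using bary_coords_eq assms(1) by blast
  ultimately show "v \<in> simplex_vertices S \<Longrightarrow> 0 < bary_coords B x v"
    and "v \<notin> simplex_vertices S \<Longrightarrow> bary_coords B x v = 0"
    by (auto simp: barycentric_coords_def)
qed

lemma continuous_on_bary_coords_simplex:
  assumes S: "S \<in> B" shows "continuous_on S (\<lambda>x. bary_coords B x v)"
proof -
  obtain n where n: "n simplex S"
    using simplex_in_complex S by blast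
  note vS = simplex_vertices[OF n]
  have coords: "barycentric_coords S x (bary_coords B x)" if "x \<in> S" for x
    using barycentric_coords_bary_coords S that .
  show ?thesis
  proof (cases "v \<in> simplex_vertices S")
    case True
    obtain f where f: "continuous_on UNIV f"
      "\<And>u. sum u (simplex_vertices S) = 1 \<Longrightarrow> f (\<Sum>w\<in>simplex_vertices S. u w *\<^sub>R w) = u v"
      using affine_coordinate_continuous[OF vS(1,2) True] by blast
    have "continuous_on S f"
      using f(1) by (rule continuous_on_subset) simp
    moreover have "f x = bary_coords B x v" if "x \<in> S" for x
      using f(2)[of "bary_coords B x"] coords[OF that] by (simp add: barycentric_coords_def)
    ultimately show ?thesis
      by (rule continuous_on_eq)
  next
    case False
    then have "0 = bary_coords B x v" if "x \<in> S" for x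
      using coords[OF that] by (simp add: barycentric_coords_def)
    with continuous_on_const show ?thesis
      by (rule continuous_on_eq)
  qed
qed

lemma continuous_on_bary_coords: "continuous_on (\<Union>B) (\<lambda>x. bary_coords B x v)"
proof -
  have "closed S" if S: "S \<in> B" for S
  proof -
    obtain n where n: "n simplex S"
      using simplex_in_complex S by blast
    have "compact (convex hull (simplex_vertices S))"
      using simplex_vertices(1)[OF n] by (rule finite_imp_compact_convex_hull)
    then show ?thesis
      by (simp add: simplex_vertices(3)[OF n] compact_imp_closed)
  qed
  moreover have "finite B"
    using complex by (simp add: simplicial_complex_def)
  ultimately show ?thesis
    using continuous_on_closed_Union[of B "\<lambda>S. S" "\<lambda>x. bary_coords B x v"]
      continuous_on_bary_coords_simplex
    by simp
qed

end

section \<open>The order complex of a family of simplices\<close>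

lemma homotopic_with_linear_product:
  fixes f g :: "'a::topological_space \<Rightarrow> 'i \<Rightarrow> real"
  assumes f: "continuous_on S f" and g: "continuous_on S g"
    and segment: "\<And>t x. t \<in> {0..1} \<Longrightarrow> x \<in> S \<Longrightarrow>
      (\<lambda>i. (1 - t) * f x i + t * g x i) \<in> T"
  shows "homotopic_with_canon (\<lambda>h. True) S T f g"
  unfolding homotopic_with_def
proof (intro exI conjI allI ballI)
  let ?H = "\<lambda>(t, x). \<lambda>i. (1 - t) * f x i + t * g x i"
  have "continuous_on ({0..1} \<times> S) ?H"
  proof (rule continuous_on_coordinatewise_then_product)
    fix i
    have "continuous_on ({0..1} \<times> S) (\<lambda>p. f (snd p) i)"
      by (rule continuous_on_compose2[OF continuous_on_product_then_coordinatewise[OF f] continuous_on_snd])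
        auto
    moreover have "continuous_on ({0..1} \<times> S) (\<lambda>p. g (snd p) i)"
      by (rule continuous_on_compose2[OF continuous_on_product_then_coordinatewise[OF g] continuous_on_snd])
        auto
    ultimately show "continuous_on ({0..1} \<times> S) (\<lambda>p. ?H p i)"
      by (auto simp: case_prod_beta intro!: continuous_intros)
  qed
  then show "continuous_map (prod_topology (top_of_set {0..1}) (top_of_set S)) (top_of_set T) ?H"
    using segment by (auto simp: prod_topology_subtopology_eu)
qed auto

lemma sum_uniform_weights:
  fixes h :: "'a \<Rightarrow> 'b::real_vector"
  assumes "finite C" "D \<subseteq> C"
  shows "(\<Sum>v\<in>C. (if v \<in> D then c else 0) *\<^sub>R h v) = c *\<^sub>R (\<Sum>v\<in>D. h v)"
proof -
  have "(\<Sum>v\<in>C. (if v \<in> D then c else 0) *\<^sub>R h v) = (\<Sum>v\<in>D. c *\<^sub>R h v)"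
    using assms by (intro sum.mono_neutral_cong_right) auto
  then show ?thesis
    by (simp add: scaleR_sum_right)
qed

locale simplex_subfamily =
  fixes B A :: "'a::euclidean_space set set" and N :: nat and e :: "nat \<Rightarrow> 'a set"
  assumes complex: "simplicial_complex B"
    and subfamily: "A \<subseteq> B"
    and enumeration: "bij_betw e {..<N} (A - {{}})"
begin

definition verts :: "nat \<Rightarrow> 'a set" where
  "verts i = simplex_vertices (e i)"

definition complex_vertices :: "'a set" where
  "complex_vertices = \<Union> (simplex_vertices ` B)"

text \<open>The maximum counts the vertices of \<open>e i\<close> as \<open>0\<close>, so it is the largest barycentric
  coordinate outside \<open>e i\<close>, or \<open>0\<close> if there is none.\<close>

definition weight :: "nat \<Rightarrow> 'a \<Rightarrow> real" where
  "weight i x = max 0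
     (Min ((\<lambda>v. bary_coords B x v) ` verts i)
      - Max ((\<lambda>v. if v \<in> verts i then 0 else bary_coords B x v) ` complex_vertices))"

definition chain :: "nat set \<Rightarrow> bool" where
  "chain I \<longleftrightarrow>
     I \<subseteq> {..<N} \<and> (\<forall>i\<in>I. \<forall>j\<in>I. verts i \<subseteq> verts j \<or> verts j \<subseteq> verts i)"

lemma enumeration_mem: "i < N \<Longrightarrow> e i \<in> A" "i < N \<Longrightarrow> e i \<noteq> {}"
  using enumeration by (auto dest: bij_betwE)

lemma enumeration_in_complex: "i < N \<Longrightarrow> e i \<in> B"
  using enumeration_mem subfamily by blast

lemma enumeration_simplex: "i < N \<Longrightarrow> \<exists>n. n simplex (e i)"
  using complex enumeration_in_complex by (simp add: simplicial_complex_def)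

lemma verts:
  assumes "i < N"
  shows "finite (verts i)" "\<not> affine_dependent (verts i)" "convex hull (verts i) = e i"
    "verts i \<noteq> {}" "0 < card (verts i)"
proof -
  obtain n where n: "n simplex (e i)"
    using enumeration_simplex[OF assms] by blast
  show "finite (verts i)" "\<not> affine_dependent (verts i)" "convex hull (verts i) = e i"
    using simplex_vertices[OF n] by (simp_all add: verts_def)
  then show "verts i \<noteq> {}" "0 < card (verts i)"
    using enumeration_mem(2)[OF assms] by (auto simp: card_gt_0_iff)
qed

lemma verts_inj:
  assumes "i < N" "j < N" "verts i = verts j" shows "i = j"
proof -
  have "e i = e j"
    using verts(3)[OF assms(1)] verts(3)[OF assms(2)] assms(3) by simp
  then show ?thesis
    by (rule inj_onD[OF bij_betw_imp_inj_on[OF enumeration]]) (use assms in auto)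
qed

lemma finite_complex_vertices: "finite complex_vertices"
proof -
  have "finite (simplex_vertices S)" if "S \<in> B" for S
    using simplex_in_complex[OF complex that] simplex_vertices(1) by blast
  then show ?thesis
    using complex by (simp add: complex_vertices_def simplicial_complex_def)
qed

lemma verts_subset_complex_vertices: "i < N \<Longrightarrow> verts i \<subseteq> complex_vertices"
  using enumeration_in_complex by (auto simp: complex_vertices_def verts_def)

sublocale chains: abstract_complex N chain
proof
  show "chain I \<Longrightarrow> I \<subseteq> {..<N}" for I
    by (simp add: chain_def)
  show "chain I \<Longrightarrow> J \<subseteq> I \<Longrightarrow> chain J" for I J
    unfolding chain_def by blast
qed

lemma chain_card_le:
  assumes dim: "\<forall>S\<in>A. \<exists>n. n \<le> int m \<and> n simplex S" and "chain I"
  shows "card I \<le> Suc m"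
proof -
  have I: "I \<subseteq> {..<N}"
    using \<open>chain I\<close> by (simp add: chain_def)
  have "card (verts i) \<le> Suc m" if i: "i < N" for i
  proof -
    obtain n where "n \<le> int m" "n simplex (e i)"
      using dim enumeration_mem(1)[OF i] by blast
    then show ?thesis
      using simplex_vertices(4) by (fastforce simp: verts_def)
  qed
  moreover have "inj_on (\<lambda>i. card (verts i)) I"
  proof (rule inj_onI)
    fix i j assume ij: "i \<in> I" "j \<in> I" "card (verts i) = card (verts j)"
    then have "verts i \<subseteq> verts j \<or> verts j \<subseteq> verts i"
      using \<open>chain I\<close> by (simp add: chain_def)
    moreover have "i < N" "j < N"
      using ij I by auto
    ultimately have "verts i = verts j"
      using card_subset_eq[OF verts(1)[of j]] card_subset_eq[OF verts(1)[of i]] ij(3) by auto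
    then show "i = j"
      using verts_inj ij I by blast
  qed
  ultimately have "card I \<le> card {1..Suc m}"
    using I verts(5) by (intro card_inj_on_le[of _ _ "{1..Suc m}"]) (auto simp: Suc_le_eq)
  then show ?thesis
    by simp
qed

lemma chain_top:
  assumes "chain I" "I \<noteq> {}"
  obtains i0 where "i0 \<in> I" "\<And>i. i \<in> I \<Longrightarrow> verts i \<subseteq> verts i0"
proof -
  have I: "I \<subseteq> {..<N}" "finite I"
    using assms(1) finite_subset by (auto simp: chain_def)
  have "Max ((\<lambda>i. card (verts i)) ` I) \<in> (\<lambda>i. card (verts i)) ` I"
    using I(2) assms(2) by (intro Max_in) auto
  then obtain i0 where i0: "i0 \<in> I" "card (verts i0) = Max ((\<lambda>i. card (verts i)) ` I)"
    by auto
  have card_le: "card (verts i) \<le> card (verts i0)" if "i \<in> I" for i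
    unfolding i0(2) using I(2) that by (intro Max_ge) auto
  have "verts i \<subseteq> verts i0" if "i \<in> I" for i
  proof -
    have "i < N"
      using I(1) that by auto
    then have "verts i0 \<subseteq> verts i \<Longrightarrow> verts i0 = verts i"
      using card_subset_eq[OF verts(1)] card_mono[OF verts(1)] card_le[OF that] by (metis le_antisym)
    moreover have "verts i \<subseteq> verts i0 \<or> verts i0 \<subseteq> verts i"
      using assms(1) that i0(1) by (simp add: chain_def)
    ultimately show ?thesis
      by blast
  qed
  with i0(1) show ?thesis
    by (rule that)
qed

lemma weight_nonneg: "0 \<le> weight i x"
  by (simp add: weight_def)

lemma weight_pos_separates:
  assumes "0 < weight i x" "i < N" "a \<in> verts i" "b \<in> complex_vertices" "b \<notin> verts i"
  shows "bary_coords B x b < bary_coords B x a"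
proof -
  have "Min ((\<lambda>v. bary_coords B x v) ` verts i) \<le> bary_coords B x a"
    using assms(3) verts(1)[OF assms(2)] by (intro Min_le) auto
  moreover have "bary_coords B x b
      \<le> Max ((\<lambda>v. if v \<in> verts i then 0 else bary_coords B x v) ` complex_vertices)"
    using assms(4,5) finite_complex_vertices by (intro Max_ge) force+
  ultimately show ?thesis
    using assms(1) by (simp add: weight_def)
qed

lemma weight_pos_chain:
  assumes "0 < weight i x" "0 < weight j x" "i < N" "j < N"
  shows "verts i \<subseteq> verts j \<or> verts j \<subseteq> verts i"
proof (rule ccontr)
  assume "\<not> (verts i \<subseteq> verts j \<or> verts j \<subseteq> verts i)"
  then obtain a b where "a \<in> verts i" "a \<notin> verts j" "b \<in> verts j" "b \<notin> verts i"
    by blast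
  then show False
    using weight_pos_separates[OF assms(1,3)] weight_pos_separates[OF assms(2,4)]
      verts_subset_complex_vertices assms(3,4) by fastforce
qed

lemma weight_pos_support:
  assumes "0 < weight i x" "i < N" "\<And>a. a \<notin> T \<Longrightarrow> bary_coords B x a = 0"
  shows "verts i \<subseteq> T"
proof
  fix a assume a: "a \<in> verts i"
  show "a \<in> T"
  proof (rule ccontr)
    assume "a \<notin> T"
    then have "Min ((\<lambda>v. bary_coords B x v) ` verts i) \<le> 0"
      using a assms(3) verts(1)[OF assms(2)] Min_le[of _ "bary_coords B x a"] by force
    moreover have "0 \<le> Max ((\<lambda>v. if v \<in> verts i then 0 else bary_coords B x v) ` complex_vertices)"
      using a verts_subset_complex_vertices[OF assms(2)] finite_complex_vertices
      by (intro Max_ge) force+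
    ultimately show False
      using assms(1) by (simp add: weight_def)
  qed
qed

lemma weight_pos_rel_interior:
  assumes "i < N" "x \<in> rel_interior (e i)"
  shows "0 < weight i x"
proof -
  note coords = bary_coords_rel_interior[OF complex enumeration_in_complex[OF assms(1)] assms(2)]
  have "0 < Min ((\<lambda>v. bary_coords B x v) ` verts i)"
    using verts(1,4)[OF assms(1)] coords(1) by (simp add: verts_def)
  moreover have "(\<lambda>v. if v \<in> verts i then 0 else bary_coords B x v) ` complex_vertices = {0}"
    using coords(2) verts(4)[OF assms(1)] verts_subset_complex_vertices[OF assms(1)]
    by (auto simp: verts_def)
  ultimately show ?thesis
    by (simp add: weight_def)
qed

lemma continuous_on_weight:
  assumes "i < N" shows "continuous_on (\<Union>B) (weight i)"
proof -
  have "continuous_on (\<Union>B) (\<lambda>x. if v \<in> verts i then 0 else bary_coords B x v)" for v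
    by (cases "v \<in> verts i") (simp_all add: continuous_on_bary_coords[OF complex])
  then show ?thesis
    unfolding weight_def using verts(1,4)[OF assms] verts_subset_complex_vertices[OF assms]
      finite_complex_vertices
    by (intro continuous_intros continuous_on_Min_image continuous_on_Max_image
        continuous_on_bary_coords[OF complex]) auto
qed

lemma open_union_subset: "open_union A \<subseteq> \<Union>B"
  unfolding open_union_def using subfamily rel_interior_subset by blast

lemma open_union_rel_interior:
  assumes "x \<in> open_union A" obtains i where "i < N" "x \<in> rel_interior (e i)"
proof -
  obtain S where S: "S \<in> A" "x \<in> rel_interior S"
    using assms by (auto simp: open_union_def)
  then have "S \<in> e ` {..<N}"
    using enumeration by (auto simp: bij_betw_def)
  with S(2) show ?thesis
    using that by blast
qed

lemma rel_interior_subset_open_union: "i < N \<Longrightarrow> rel_interior (e i) \<subseteq> open_union A"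
  using enumeration_mem by (auto simp: open_union_def)

definition to_realization :: "'a \<Rightarrow> nat \<Rightarrow> real" where
  "to_realization x i = (if i < N then weight i x / (\<Sum>j<N. weight j x) else 0)"

definition barycentre :: "nat \<Rightarrow> 'a" where
  "barycentre i = (1 / real (card (verts i))) *\<^sub>R (\<Sum>v\<in>verts i. v)"

definition from_realization :: "(nat \<Rightarrow> real) \<Rightarrow> 'a" where
  "from_realization y = (\<Sum>i<N. y i *\<^sub>R barycentre i)"

definition from_realization_coords :: "(nat \<Rightarrow> real) \<Rightarrow> 'a \<Rightarrow> real" where
  "from_realization_coords y v = (\<Sum>i<N. y i * (if v \<in> verts i then 1 / real (card (verts i)) else 0))"

lemma sum_weight_pos: "x \<in> open_union A \<Longrightarrow> 0 < (\<Sum>j<N. weight j x)"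
proof -
  assume "x \<in> open_union A"
  then obtain i where i: "i < N" "x \<in> rel_interior (e i)"
    by (rule open_union_rel_interior)
  have "weight i x \<le> (\<Sum>j<N. weight j x)"
    using i(1) weight_nonneg by (intro member_le_sum) auto
  with weight_pos_rel_interior[OF i] show ?thesis
    by linarith
qed

lemma support_to_realization:
  "x \<in> open_union A \<Longrightarrow> {i. to_realization x i \<noteq> 0} = {i. i < N \<and> 0 < weight i x}"
  using sum_weight_pos weight_nonneg by (auto simp: to_realization_def less_le)

lemma to_realization_in_realization:
  assumes x: "x \<in> open_union A" shows "to_realization x \<in> realization N chain"
proof -
  have "(\<Sum>i<N. to_realization x i) = 1"
    using sum_weight_pos[OF x] by (simp add: to_realization_def sum_divide_distrib[symmetric])
  moreover have "chain {i. to_realization x i \<noteq> 0}"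
    unfolding support_to_realization[OF x] chain_def using weight_pos_chain by blast
  ultimately show ?thesis
    using sum_weight_pos[OF x] weight_nonneg by (simp add: realization_def to_realization_def)
qed

lemma continuous_on_to_realization: "continuous_on (open_union A) to_realization"
proof (rule continuous_on_coordinatewise_then_product)
  fix i
  have weight: "continuous_on (open_union A) (weight j)" if "j < N" for j
    using continuous_on_weight[OF that] open_union_subset by (rule continuous_on_subset)
  have "\<forall>x\<in>open_union A. (\<Sum>j<N. weight j x) \<noteq> 0"
    by (auto dest: sum_weight_pos)
  then have "continuous_on (open_union A) (\<lambda>x. weight i x / (\<Sum>j<N. weight j x))" if "i < N"
    using weight[OF that] weight by (intro continuous_on_divide continuous_intros) auto
  then show "continuous_on (open_union A) (\<lambda>x. to_realization x i)"
    by (cases "i < N") (simp_all add: to_realization_def)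
qed

lemma sum_from_realization_coords_scaleR:
  fixes h :: "'a \<Rightarrow> 'b::real_vector"
  assumes "i0 < N" and below: "\<And>i. i < N \<Longrightarrow> y i \<noteq> 0 \<Longrightarrow> verts i \<subseteq> verts i0"
  shows "(\<Sum>v\<in>verts i0. from_realization_coords y v *\<^sub>R h v)
       = (\<Sum>i<N. (y i / real (card (verts i))) *\<^sub>R (\<Sum>v\<in>verts i. h v))"
proof -
  have "(\<Sum>v\<in>verts i0. from_realization_coords y v *\<^sub>R h v)
      = (\<Sum>i<N. y i *\<^sub>R (\<Sum>v\<in>verts i0. (if v \<in> verts i then 1 / real (card (verts i)) else 0) *\<^sub>R h v))"
    unfolding from_realization_coords_def
    by (simp add: scaleR_sum_left scaleR_sum_right sum.swap[of _ "verts i0"])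
  also have "\<dots> = (\<Sum>i<N. (y i / real (card (verts i))) *\<^sub>R (\<Sum>v\<in>verts i. h v))"
  proof (rule sum.cong)
    fix i assume i: "i \<in> {..<N}"
    show "y i *\<^sub>R (\<Sum>v\<in>verts i0. (if v \<in> verts i then 1 / real (card (verts i)) else 0) *\<^sub>R h v)
        = (y i / real (card (verts i))) *\<^sub>R (\<Sum>v\<in>verts i. h v)"
    proof (cases "y i = 0")
      case False
      then have "verts i \<subseteq> verts i0"
        using below i by simp
      then show ?thesis
        by (simp add: sum_uniform_weights[OF verts(1)[OF assms(1)]])
    qed simp
  qed simp
  finally show ?thesis .
qed

lemma from_realization_barycentric:
  assumes y0: "\<And>i. 0 \<le> y i" and y1: "(\<Sum>i<N. y i) = 1" and i0: "i0 < N" "0 < y i0"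
    and below: "\<And>i. i < N \<Longrightarrow> y i \<noteq> 0 \<Longrightarrow> verts i \<subseteq> verts i0"
  shows "barycentric_coords (e i0) (from_realization y) (from_realization_coords y)"
    and "from_realization y \<in> rel_interior (e i0)"
proof -
  note sums = sum_from_realization_coords_scaleR[where y = y, OF i0(1) below]
  have "(\<Sum>v\<in>verts i0. from_realization_coords y v) = (\<Sum>i<N. y i)"
    using sums[where h = "\<lambda>_. 1 :: real"] verts(5) by simp
  then have sum1: "sum (from_realization_coords y) (verts i0) = 1"
    using y1 by simp
  have sum2: "(\<Sum>v\<in>verts i0. from_realization_coords y v *\<^sub>R v) = from_realization y"
    using sums[where h = "\<lambda>v. v"] by (simp add: from_realization_def barycentre_def)
  have zero: "from_realization_coords y v = 0" if "v \<notin> verts i0" for v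
    unfolding from_realization_coords_def using below that by (intro sum.neutral) auto
  have pos: "0 < from_realization_coords y v" if "v \<in> verts i0" for v
  proof -
    have "y i0 * (1 / real (card (verts i0))) \<le> from_realization_coords y v"
      unfolding from_realization_coords_def
      using member_le_sum[of i0 "{..<N}"
          "\<lambda>i. y i * (if v \<in> verts i then 1 / real (card (verts i)) else 0)"]
        that i0(1) y0 verts(5)
      by simp
    moreover have "0 < y i0 * (1 / real (card (verts i0)))"
      using i0 verts(5) by simp
    ultimately show ?thesis
      by linarith
  qed
  have nonneg: "0 \<le> from_realization_coords y v" for v
    unfolding from_realization_coords_def using y0 by (intro sum_nonneg) auto
  show "barycentric_coords (e i0) (from_realization y) (from_realization_coords y)"
    using zero nonneg sum1 sum2 by (simp add: barycentric_coords_def verts_def)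
  have "from_realization y \<in> rel_interior (convex hull (verts i0))"
    unfolding rel_interior_convex_hull_explicit[OF verts(2)[OF i0(1)]] using pos sum1 sum2 by blast
  then show "from_realization y \<in> rel_interior (e i0)"
    by (simp add: verts(3)[OF i0(1)])
qed

lemma from_realization_rel_interior:
  assumes y: "y \<in> realization N chain"
  obtains i0 where "i0 < N" "from_realization y \<in> rel_interior (e i0)"
    "bary_coords B (from_realization y) = from_realization_coords y"
proof -
  obtain i0 where i0: "i0 \<in> {i. y i \<noteq> 0}"
    "\<And>i. i \<in> {i. y i \<noteq> 0} \<Longrightarrow> verts i \<subseteq> verts i0"
    using chain_top chains.support_in_realization[OF y] by blast
  have y0: "\<And>i. 0 \<le> y i" and y1: "(\<Sum>i<N. y i) = 1"
    using y by (auto simp: realization_def)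
  have "i0 < N"
    using chains.support_in_realization(1)[OF y] chains.face_subset i0(1) by blast
  moreover have "0 < y i0"
    using i0(1) y0[of i0] by simp
  ultimately show ?thesis
    using from_realization_barycentric[OF y0 y1] i0(2)
      bary_coords_eq[OF complex enumeration_in_complex] that by blast
qed

lemma from_realization_in_open_union: "y \<in> realization N chain \<Longrightarrow> from_realization y \<in> open_union A"
  using from_realization_rel_interior rel_interior_subset_open_union by blast

lemma continuous_on_from_realization: "continuous_on S from_realization"
  unfolding from_realization_def by (intro continuous_intros)

lemma from_to_realization_rel_interior:
  assumes i0: "i0 < N" and x: "x \<in> rel_interior (e i0)"
  shows "from_realization (to_realization x) \<in> rel_interior (e i0)"
proof -
  have x_open: "x \<in> open_union A"
    using rel_interior_subset_open_union[OF i0] x by blast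
  have "bary_coords B x a = 0" if "a \<notin> verts i0" for a
    using bary_coords_rel_interior(2)[OF complex enumeration_in_complex[OF i0] x] that
    by (simp add: verts_def)
  then have "verts i \<subseteq> verts i0" if "i < N" "to_realization x i \<noteq> 0" for i
    using weight_pos_support that support_to_realization[OF x_open] by blast
  moreover have "0 < to_realization x i0"
    using weight_pos_rel_interior[OF i0 x] sum_weight_pos[OF x_open] i0 by (simp add: to_realization_def)
  moreover have "\<And>i. 0 \<le> to_realization x i" "(\<Sum>i<N. to_realization x i) = 1"
    using to_realization_in_realization[OF x_open] by (auto simp: realization_def)
  ultimately show ?thesis
    using from_realization_barycentric(2) i0 by blast
qed

lemma weight_pos_comparable_support:
  assumes y: "y \<in> realization N chain" and i: "i < N" "0 < weight i (from_realization y)"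
    and j: "y j \<noteq> 0"
  shows "verts i \<subseteq> verts j \<or> verts j \<subseteq> verts i"
proof (rule ccontr)
  assume "\<not> (verts i \<subseteq> verts j \<or> verts j \<subseteq> verts i)"
  then obtain a b where ab: "a \<in> verts i" "a \<notin> verts j" "b \<in> verts j" "b \<notin> verts i"
    by blast
  have chain: "chain {l. y l \<noteq> 0}" and y0: "\<And>l. 0 \<le> y l"
    using y by (auto simp: realization_def)
  have "j < N"
    using chain j by (auto simp: chain_def)
  have "bary_coords B (from_realization y) = from_realization_coords y"
    using from_realization_rel_interior[OF y] by blast
  then have "from_realization_coords y b < from_realization_coords y a"
    using weight_pos_separates[OF i(2,1) ab(1) _ ab(4)] ab(3)
      verts_subset_complex_vertices[OF \<open>j < N\<close>]
    by auto
  text \<open>A simplex of the support containing \<open>a\<close> is comparable with \<open>verts j\<close> but not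
    inside it, so it contains \<open>verts j\<close> and hence \<open>b\<close>.\<close>
  moreover have "from_realization_coords y a \<le> from_realization_coords y b"
    unfolding from_realization_coords_def
  proof (rule sum_mono)
    fix l assume "l \<in> {..<N}"
    show "y l * (if a \<in> verts l then 1 / real (card (verts l)) else 0)
        \<le> y l * (if b \<in> verts l then 1 / real (card (verts l)) else 0)"
    proof (cases "y l = 0")
      case False
      then have "verts l \<subseteq> verts j \<or> verts j \<subseteq> verts l"
        using chain j by (simp add: chain_def)
      then have "a \<in> verts l \<Longrightarrow> b \<in> verts l"
        using ab by blast
      then show ?thesis
        using y0[of l] by (cases "a \<in> verts l") auto
    qed simp
  qed
  ultimately show False
    by simp
qed

lemma chain_support_segment:
  assumes y: "y \<in> realization N chain"
  shows "chain ({i. to_realization (from_realization y) i \<noteq> 0} \<union> {i. y i \<noteq> 0})"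
proof -
  let ?x = "from_realization y"
  have x: "?x \<in> open_union A"
    using from_realization_in_open_union[OF y] .
  have chain_r: "chain {i. to_realization ?x i \<noteq> 0}" and chain_y: "chain {i. y i \<noteq> 0}"
    using to_realization_in_realization[OF x] y by (auto simp: realization_def)
  have "verts i \<subseteq> verts j \<or> verts j \<subseteq> verts i"
    if "to_realization ?x i \<noteq> 0" "y j \<noteq> 0" for i j
    using weight_pos_comparable_support[OF y _ _ that(2)] that(1) support_to_realization[OF x]
    by blast
  then show ?thesis
    using chain_r chain_y unfolding chain_def by blast
qed

lemma segment_in_realization:
  assumes y: "y \<in> realization N chain" and t: "t \<in> {0..1}"
  shows "(\<lambda>i. (1 - t) * to_realization (from_realization y) i + t * y i) \<in> realization N chain"
proof -
  let ?r = "to_realization (from_realization y)"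
  have r: "?r \<in> realization N chain"
    using to_realization_in_realization from_realization_in_open_union y by blast
  have "{i. (1 - t) * ?r i + t * y i \<noteq> 0} \<subseteq> {i. ?r i \<noteq> 0} \<union> {i. y i \<noteq> 0}"
    by auto
  then have "chain {i. (1 - t) * ?r i + t * y i \<noteq> 0}"
    using chain_support_segment[OF y] chains.face_downward_closed by blast
  moreover have "(\<Sum>i<N. (1 - t) * ?r i + t * y i) = 1"
    using r y by (simp add: realization_def sum.distrib sum_distrib_left[symmetric])
  ultimately show ?thesis
    using r y t by (simp add: realization_def)
qed

theorem open_union_homotopy_equivalent_realization:
  "top_of_set (open_union A) homotopy_equivalent_space top_of_set (realization N chain)"
  unfolding homotopy_equivalent_space_def
proof (intro exI conjI)
  show "continuous_map (top_of_set (open_union A)) (top_of_set (realization N chain)) to_realization"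
    using continuous_on_to_realization to_realization_in_realization by auto
  show "continuous_map (top_of_set (realization N chain)) (top_of_set (open_union A)) from_realization"
    using continuous_on_from_realization from_realization_in_open_union by auto
  show "homotopic_with (\<lambda>x. True) (top_of_set (open_union A)) (top_of_set (open_union A))
      (from_realization \<circ> to_realization) id"
  proof (rule homotopic_with_linear)
    show "continuous_on (open_union A) (from_realization \<circ> to_realization)"
      using continuous_on_to_realization continuous_on_from_realization by (rule continuous_on_compose)
    fix x assume "x \<in> open_union A"
    then obtain i where i: "i < N" "x \<in> rel_interior (e i)"
      by (rule open_union_rel_interior)
    have "convex (rel_interior (e i))"
      unfolding verts(3)[OF i(1), symmetric] by (rule convex_rel_interior[OF convex_convex_hull])
    then have "closed_segment ((from_realization \<circ> to_realization) x) (id x) \<subseteq> rel_interior (e i)"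
      using from_to_realization_rel_interior[OF i] i(2) by (intro closed_segment_subset) auto
    then show "closed_segment ((from_realization \<circ> to_realization) x) (id x) \<subseteq> open_union A"
      using rel_interior_subset_open_union[OF i(1)] by blast
  qed (simp add: continuous_on_id)
  show "homotopic_with (\<lambda>x. True) (top_of_set (realization N chain)) (top_of_set (realization N chain))
      (to_realization \<circ> from_realization) id"
    using continuous_on_compose[OF continuous_on_from_realization
        continuous_on_subset[OF continuous_on_to_realization]]
      from_realization_in_open_union segment_in_realization
    by (intro homotopic_with_linear_product) auto
qed

end

theorem lemma5p3:
  fixes B A :: "'a::euclidean_space set set" and m :: nat
  assumes "simplicial_complex B"
    and "A \<subseteq> B" and "A \<noteq> {}"
    and "\<forall>S\<in>A. \<exists>n. n \<le> int m \<and> n simplex S"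
  shows "\<exists>Y :: (nat \<Rightarrow> real) topology.
           finite_CW_complex_dim Y m \<and>
           (subtopology euclidean (open_union A)) homotopy_equivalent_space Y"
proof -
  have "finite (A - {{}})"
    using assms(1,2) finite_subset by (auto simp: simplicial_complex_def)
  then obtain e where "bij_betw e {..<card (A - {{}})} (A - {{}})"
    using ex_bij_betw_nat_finite lessThan_atLeast0 by metis
  then interpret simplex_subfamily B A "card (A - {{}})" e
    using assms(1,2) by unfold_locales
  have "finite_CW_complex_dim (subtopology (powertop_real UNIV) (realization (card (A - {{}})) chain)) m"
    using chain_card_le[OF assms(4)] by (rule chains.realization_finite_CW_complex)
  with open_union_homotopy_equivalent_realization show ?thesis
    by (auto simp: euclidean_product_topology)
qed

end
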